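(* Let $\mathbf{H}_1,\mathbf{H}_2$ be complex Hilbert spaces with $\mathbf{H}_1$ separable with orthonormal basis $(\psi_j)_{j\ge0}$, $H=\mathbf{H}_1\otimes\mathbf{H}_2$, $\mathcal{A}:H\to H$ bounded linear, $\varphi\in H$. Let $y_1,\dots,y_n\in\mathbf{H}_2$ with $\langle y_i,y_j\rangle_2=\delta_{ij}$ and let $k_1,\dots,k_n\in\mathbf{H}_2$ be linearly independent with $\langle k_i,y_j\rangle_2=\delta_{ij}$. Assume $\|\mathcal{A}\mathcal{P}_k\|<1$ and $\tilde{\mathcal{P}}_k\sum_{i=0}^{\infty}(\mathcal{A}\mathcal{P}_k)^i\varphi=0$. Then there exists $\delta>0$ such that for every $\varepsilon$ with $|\varepsilon|<\delta$ and every $\eta_1,\dots,\eta_n\in\mathbf{H}_2$ with $\|\eta_i\|=1$ and $\langle\eta_i,y_j\rangle_2=0$ for all $i,j$, setting $k'_i=k_i+\varepsilon\eta_i$, the series $x':=\sum_{i=0}^{\infty}(\mathcal{A}\mathcal{P}_{k'})^i\varphi$ converges and $\tilde{\mathcal{P}}_{k'}x'=0$. If moreover $k'_1,\dots,k'_n$ are linearly independent, then $x'$ solves $\mathcal{A}x'+\varphi=x'$ subject to the constraints $\langle x',y_i\rangle_{2'}=0$ for $i=1,\dots,n$ (equivalently $\langle x',\psi_j\otimes y_i\rangle=0$ for all $j\ge0$, $1\le i\le n$).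
   Context: $H=\mathbf{H}_1\otimes\mathbf{H}_2$ is the Hilbert tensor product with inner product $\langle\cdot,\cdot\rangle$; $\langle\cdot,\cdot\rangle_1,\langle\cdot,\cdot\rangle_2$ are the inner products of $\mathbf{H}_1,\mathbf{H}_2$ (linear in the first argument). The partial inner product $\langle\cdot,\cdot\rangle_{2'}:H\times\mathbf{H}_2\to\mathbf{H}_1$ is determined by $\langle\langle x,y\rangle_{2'},z\rangle_1=\langle x,z\otimes y\rangle$ for all $x\in H$, $y\in\mathbf{H}_2$, $z\in\mathbf{H}_1$. For $u_1,\dots,u_n\in\mathbf{H}_2$: $\mathcal{P}_u x=x-\sum_{i=1}^n\langle x,y_i\rangle_{2'}\otimes u_i$ and $\tilde{\mathcal{P}}_u x=\sum_{i=1}^n\langle x,y_i\rangle_{2'}\otimes u_i$. $\|\cdot\|$ is the operator norm. *)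

theory Defs
  imports "HOL-Analysis.Analysis"
begin

class complex_vector = real_vector +
  fixes scaleC :: "complex \<Rightarrow> 'a \<Rightarrow> 'a" (infixr "*\<^sub>C" 75)
  assumes scaleC_add_right: "a *\<^sub>C (x + y) = a *\<^sub>C x + a *\<^sub>C y"
    and scaleC_add_left: "(a + b) *\<^sub>C x = a *\<^sub>C x + b *\<^sub>C x"
    and scaleC_scaleC: "a *\<^sub>C (b *\<^sub>C x) = (a * b) *\<^sub>C x"
    and scaleC_one: "1 *\<^sub>C x = x"
    and scaleR_scaleC: "r *\<^sub>R x = complex_of_real r *\<^sub>C x"

class complex_inner = complex_vector + real_normed_vector +
  fixes cinner :: "'a \<Rightarrow> 'a \<Rightarrow> complex"
  assumes cinner_commute: "cinner x y = cnj (cinner y x)"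
    and cinner_add_left: "cinner (x + y) z = cinner x z + cinner y z"
    and cinner_scaleC_left: "cinner (c *\<^sub>C x) y = c * cinner x y"
    and cinner_self_norm: "cinner x x = complex_of_real ((norm x)\<^sup>2)"

class chilbert_space = complex_inner + complete_space

definition clinear :: "('a::complex_vector \<Rightarrow> 'b::complex_vector) \<Rightarrow> bool" where
  "clinear f \<longleftrightarrow> (\<forall>x y. f (x + y) = f x + f y) \<and> (\<forall>c x. f (c *\<^sub>C x) = c *\<^sub>C f x)"

definition bounded_clinear :: "('a::complex_inner \<Rightarrow> 'b::complex_inner) \<Rightarrow> bool" where
  "bounded_clinear f \<longleftrightarrow> clinear f \<and> (\<exists>K. \<forall>x. norm (f x) \<le> norm x * K)"

definition cspan :: "'a::complex_vector set \<Rightarrow> 'a set" where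
  "cspan S = {x. \<exists>F c. finite F \<and> F \<subseteq> S \<and> x = (\<Sum>v\<in>F. c v *\<^sub>C v)}"

definition clin_indep :: "nat \<Rightarrow> (nat \<Rightarrow> 'a::complex_vector) \<Rightarrow> bool" where
  "clin_indep n u \<longleftrightarrow> (\<forall>c. (\<Sum>i<n. c i *\<^sub>C u i) = 0 \<longrightarrow> (\<forall>i<n. c i = 0))"

definition orthonormal_basis :: "nat set \<Rightarrow> (nat \<Rightarrow> 'a::chilbert_space) \<Rightarrow> bool" where
  "orthonormal_basis J \<psi> \<longleftrightarrow>
     (\<forall>i\<in>J. \<forall>j\<in>J. cinner (\<psi> i) (\<psi> j) = (if i = j then 1 else 0)) \<and>
     closure (cspan (\<psi> ` J)) = UNIV"

text \<open>tens realises H as the Hilbert tensor product H1 \<otimes> H2 (characterised up to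
  unitary isomorphism): bilinear, inner product of simple tensors multiplies,
  and the span of simple tensors is dense.\<close>
definition hilbert_tensor :: "('h1::chilbert_space \<Rightarrow> 'h2::chilbert_space \<Rightarrow> 'h::chilbert_space) \<Rightarrow> bool" where
  "hilbert_tensor tens \<longleftrightarrow>
     (\<forall>b. clinear (\<lambda>a. tens a b)) \<and> (\<forall>a. clinear (\<lambda>b. tens a b)) \<and>
     (\<forall>a b c d. cinner (tens a b) (tens c d) = cinner a c * cinner b d) \<and>
     closure (cspan (range (case_prod tens))) = UNIV"

text \<open>Partial inner product: the unique w with cinner w z = cinner x (z \<otimes> y) for all z.\<close>
definition pinner2 :: "('h1::chilbert_space \<Rightarrow> 'h2::chilbert_space \<Rightarrow> 'h::chilbert_space) \<Rightarrow> 'h \<Rightarrow> 'h2 \<Rightarrow> 'h1" where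
  "pinner2 tens x y = (THE w. \<forall>z. cinner w z = cinner x (tens z y))"

definition Ptil :: "('h1::chilbert_space \<Rightarrow> 'h2::chilbert_space \<Rightarrow> 'h::chilbert_space) \<Rightarrow> nat \<Rightarrow>
    (nat \<Rightarrow> 'h2) \<Rightarrow> (nat \<Rightarrow> 'h2) \<Rightarrow> 'h \<Rightarrow> 'h" where
  "Ptil tens n y u x = (\<Sum>i<n. tens (pinner2 tens x (y i)) (u i))"

definition Pu :: "('h1::chilbert_space \<Rightarrow> 'h2::chilbert_space \<Rightarrow> 'h::chilbert_space) \<Rightarrow> nat \<Rightarrow>
    (nat \<Rightarrow> 'h2) \<Rightarrow> (nat \<Rightarrow> 'h2) \<Rightarrow> 'h \<Rightarrow> 'h" where
  "Pu tens n y u x = x - Ptil tens n y u x"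

end

theory Submission
  imports Defs
begin

(* The solution x of the unperturbed problem satisfies the constraints: all partial inner products
   <x, y_i>_2' vanish, because k and y are biorthogonal. Then the correction term Ptil with respect
   to ANY family k' annihilates x, so x is a fixed point of z |-> phi + A (Pu_k' z) for every k'.
   As Pu_k' depends Lipschitz-continuously on k', A Pu_k' is still a contraction for k' close to k,
   and its Neumann series converges to its unique fixed point, which is x.
   The partial inner product is well defined by the Riesz representation theorem, obtained here
   from the point of minimal norm on a closed affine hyperplane. *)

section \<open>Complex inner product spaces\<close>

interpretation complex_vector: vector_space "scaleC :: complex \<Rightarrow> 'a \<Rightarrow> 'a::complex_vector"
  by unfold_locales (simp_all add: scaleC_add_right scaleC_add_left scaleC_scaleC scaleC_one)

lemma additive_cinner_left: "Modules.additive (\<lambda>x. cinner x y)"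
  by unfold_locales (rule cinner_add_left)

lemma cinner_zero_left [simp]: "cinner 0 y = 0"
  by (rule additive.zero[OF additive_cinner_left])

lemma cinner_diff_left: "cinner (x - x') y = cinner x y - cinner x' y"
  by (rule additive.diff[OF additive_cinner_left])

lemma cinner_add_right: "cinner x (y + y') = cinner x y + cinner x y'"
  by (metis cinner_commute cinner_add_left complex_cnj_add)

lemma cinner_scaleC_right: "cinner x (c *\<^sub>C y) = cnj c * cinner x y"
  by (metis cinner_commute cinner_scaleC_left complex_cnj_mult)

lemma cinner_zero_right [simp]: "cinner x 0 = 0"
  by (metis cinner_commute cinner_zero_left complex_cnj_zero)

lemma cinner_scaleR_right: "cinner x (r *\<^sub>R y) = of_real r * cinner x y"
  by (simp add: scaleR_scaleC cinner_scaleC_right)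

lemma Re_cinner_self: "Re (cinner (x::'a::complex_inner) x) = (norm x)\<^sup>2"
  by (simp add: cinner_self_norm)

lemma cinner_self_eq_zero [simp]: "cinner (x::'a::complex_inner) x = 0 \<longleftrightarrow> x = 0"
  by (simp add: cinner_self_norm)

lemma norm_eq_1_iff_cinner_self: "norm (x::'a::complex_inner) = 1 \<longleftrightarrow> cinner x x = 1"
  using norm_ge_zero[of x] by (simp add: cinner_self_norm power2_eq_1_iff del: of_real_power norm_ge_zero)

lemma norm_add_square:
  "(norm ((x::'a::complex_inner) + y))\<^sup>2 = (norm x)\<^sup>2 + (norm y)\<^sup>2 + 2 * Re (cinner x y)"
proof -
  have "cinner (x + y) (x + y) = cinner x x + cinner y y + (cinner x y + cnj (cinner x y))"
    by (simp add: cinner_add_left cinner_add_right cinner_commute[of y x])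
  then show ?thesis
    by (simp flip: Re_cinner_self)
qed

lemma parallelogram_law:
  "(norm ((x::'a::complex_inner) + y))\<^sup>2 + (norm (x - y))\<^sup>2 = 2 * (norm x)\<^sup>2 + 2 * (norm y)\<^sup>2"
  using norm_add_square[of x y] norm_add_square[of x "- y"]
  by (simp add: cinner_scaleR_right[of x "-1" y, simplified])

lemma norm_scaleC: "norm (c *\<^sub>C (x::'a::complex_inner)) = cmod c * norm x"
proof -
  have "cinner (c *\<^sub>C x) (c *\<^sub>C x) = (c * cnj c) * cinner x x"
    by (simp add: cinner_scaleC_left cinner_scaleC_right mult_ac)
  also have "c * cnj c = of_real ((cmod c)\<^sup>2)"
    by (rule complex_norm_square[symmetric])
  finally have "(norm (c *\<^sub>C x))\<^sup>2 = (cmod c * norm x)\<^sup>2"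
    unfolding cinner_self_norm power_mult_distrib of_real_mult[symmetric] of_real_eq_iff .
  then show ?thesis
    by (simp add: power2_eq_iff_nonneg)
qed

lemma Re_cinner_cauchy_schwarz: "Re (cinner (x::'a::complex_inner) y) \<le> norm x * norm y"
proof (cases "y = 0")
  case False
  define r where "r = Re (cinner x y)"
  define s where "s = r / (norm y)\<^sup>2"
  have y: "(norm y)\<^sup>2 > 0"
    using False by simp
  have "0 \<le> (norm (x + (- s) *\<^sub>R y))\<^sup>2"
    by simp
  also have "\<dots> = (norm x)\<^sup>2 + s\<^sup>2 * (norm y)\<^sup>2 - 2 * s * r"
    by (simp only: norm_add_square cinner_scaleR_right norm_scaleR)
      (simp add: power_mult_distrib r_def)
  also have "\<dots> = (norm x)\<^sup>2 - r\<^sup>2 / (norm y)\<^sup>2"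
    using y by (simp add: s_def field_simps power2_eq_square)
  finally have "r\<^sup>2 \<le> (norm x * norm y)\<^sup>2"
    using y by (simp add: field_simps power_mult_distrib)
  then show ?thesis
    unfolding r_def by (rule power2_le_imp_le) simp
qed simp

lemma norm_cinner_cauchy_schwarz: "cmod (cinner (x::'a::complex_inner) y) \<le> norm x * norm y"
proof (cases "cinner x y = 0")
  case False
  define c where "c = cinner x y"
  \<comment> \<open>rotating x makes its inner product with y real and nonnegative\<close>
  have "cinner (cnj c *\<^sub>C x) y = of_real ((cmod c)\<^sup>2)"
    by (simp add: cinner_scaleC_left c_def complex_norm_square mult.commute del: of_real_power)
  then have "(cmod c)\<^sup>2 \<le> cmod c * (norm x * norm y)"
    using Re_cinner_cauchy_schwarz[of "cnj c *\<^sub>C x" y] by (simp add: norm_scaleC mult.assoc del: of_real_power)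
  then show ?thesis
    using False by (simp add: c_def power2_eq_square)
qed simp

section \<open>Riesz representation\<close>

lemma Cauchy_minimizing_sequence:
  fixes z :: "nat \<Rightarrow> 'a::complex_inner"
  assumes midpoint: "\<And>a b. a \<in> C \<Longrightarrow> b \<in> C \<Longrightarrow> (1/2) *\<^sub>R (a + b) \<in> C"
    and lower: "\<And>c. c \<in> C \<Longrightarrow> d \<le> norm c"
    and z: "\<And>m. z m \<in> C" and lim: "(\<lambda>m. norm (z m)) \<longlonglongrightarrow> d"
  shows "Cauchy z"
proof (rule metric_CauchyI)
  fix e :: real
  assume "0 < e"
  have d: "0 \<le> d"
    using tendsto_le[OF _ lim tendsto_const] by simp
  have "(\<lambda>m. (norm (z m))\<^sup>2) \<longlonglongrightarrow> d\<^sup>2"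
    by (intro tendsto_power lim)
  then obtain M where M0: "\<And>m. m \<ge> M \<Longrightarrow> norm ((norm (z m))\<^sup>2 - d\<^sup>2) < e\<^sup>2 / 4"
    using LIMSEQ_D[of _ "d\<^sup>2" "e\<^sup>2 / 4"] \<open>0 < e\<close> by auto
  have M: "(norm (z m))\<^sup>2 < d\<^sup>2 + e\<^sup>2 / 4" if "m \<ge> M" for m
    using M0[OF that] unfolding real_norm_def by arith
  have "dist (z m) (z m') < e" if "m \<ge> M" "m' \<ge> M" for m m'
  proof -
    \<comment> \<open>the midpoint lies in C, so the parallelogram law leaves little room for z m - z m'\<close>
    have "d \<le> norm ((1/2) *\<^sub>R (z m + z m'))"
      by (intro lower midpoint z)
    then have "(2 * d)\<^sup>2 \<le> (norm (z m + z m'))\<^sup>2"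
      using d by (intro power_mono) auto
    then have "(norm (z m - z m'))\<^sup>2 < e\<^sup>2"
      using parallelogram_law[of "z m" "z m'"] M[OF that(1)] M[OF that(2)] by simp
    then show ?thesis
      using \<open>0 < e\<close> by (simp add: dist_norm power_less_imp_less_base)
  qed
  then show "\<exists>M. \<forall>m\<ge>M. \<forall>m'\<ge>M. dist (z m) (z m') < e"
    by blast
qed

lemma closed_midpoint_convex_has_min_norm:
  fixes C :: "'a::{complex_inner, complete_space} set"
  assumes "closed C" and "C \<noteq> {}"
    and midpoint: "\<And>a b. a \<in> C \<Longrightarrow> b \<in> C \<Longrightarrow> (1/2) *\<^sub>R (a + b) \<in> C"
  shows "\<exists>w\<in>C. \<forall>c\<in>C. norm w \<le> norm c"
proof -
  define d where "d = Inf (norm ` C)"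
  have lower: "d \<le> norm c" if "c \<in> C" for c
    unfolding d_def using that by (intro cInf_lower bdd_belowI[of _ 0]) auto
  have "\<exists>c\<in>C. norm c < d + inverse (real (Suc m))" for m
    using cInf_lessD[of "norm ` C" "d + inverse (real (Suc m))"] \<open>C \<noteq> {}\<close>
    by (auto simp: d_def)
  then obtain z where z: "\<And>m. z m \<in> C" "\<And>m. norm (z m) < d + inverse (real (Suc m))"
    by metis
  have norm_z: "(\<lambda>m. norm (z m)) \<longlonglongrightarrow> d"
  proof (rule tendsto_sandwich)
    show "\<forall>\<^sub>F m in sequentially. d \<le> norm (z m)"
      by (simp add: lower z(1))
    show "\<forall>\<^sub>F m in sequentially. norm (z m) \<le> d + inverse (real (Suc m))"
      using z(2) by (simp add: less_imp_le)
    show "(\<lambda>m. d + inverse (real (Suc m))) \<longlonglongrightarrow> d"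
      using tendsto_add[OF tendsto_const LIMSEQ_inverse_real_of_nat, of d] by simp
  qed simp
  obtain w where w: "z \<longlonglongrightarrow> w"
    using Cauchy_minimizing_sequence[OF midpoint lower z(1) norm_z] Cauchy_convergent_iff
      convergent_def by blast
  have "w \<in> C"
    using closed_sequentially[OF \<open>closed C\<close> z(1) w] .
  moreover have "norm w = d"
    using tendsto_unique[OF _ tendsto_norm[OF w] norm_z] by simp
  ultimately show ?thesis
    using lower by auto
qed

lemma cinner_eq_zero_if_norm_minimal:
  assumes min: "\<And>t. norm w \<le> norm (w + t *\<^sub>C v)"
  shows "cinner v w = 0"
proof -
  define c where "c = cinner w v"
  define s where "s = 1 / ((norm v)\<^sup>2 + 1)"
  have "0 < (norm v)\<^sup>2 + 1"
    by (intro add_nonneg_pos) simp_all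
  then have s: "0 < s" "s * (norm v)\<^sup>2 < 1"
    by (simp_all add: s_def)
  define t where "t = - (of_real s * c)"
  have "(norm w)\<^sup>2 \<le> (norm (w + t *\<^sub>C v))\<^sup>2"
    by (rule power_mono[OF min]) simp
  also have "\<dots> = (norm w)\<^sup>2 + (norm (t *\<^sub>C v))\<^sup>2 + 2 * Re (cinner w (t *\<^sub>C v))"
    by (rule norm_add_square)
  also have "cinner w (t *\<^sub>C v) = - of_real (s * (cmod c)\<^sup>2)"
    unfolding cinner_scaleC_right t_def
    by (simp add: c_def complex_norm_square mult_ac del: of_real_power)
  also have "norm (t *\<^sub>C v) = s * cmod c * norm v"
    using s by (simp add: t_def norm_scaleC norm_mult)
  finally have "0 \<le> s * (cmod c)\<^sup>2 * (s * (norm v)\<^sup>2 - 2)"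
    by (simp add: algebra_simps power2_eq_square)
  then have "s * (cmod c)\<^sup>2 \<le> 0"
    using s by (simp add: zero_le_mult_iff)
  then have "(cmod c)\<^sup>2 \<le> 0"
    using s by (simp add: mult_le_0_iff)
  then show ?thesis
    by (simp add: c_def cinner_commute[of v])
qed

theorem riesz_representation:
  fixes f :: "'a::chilbert_space \<Rightarrow> complex"
  assumes lin: "bounded_linear f" and scaleC: "\<And>c x. f (c *\<^sub>C x) = c * f x"
  shows "\<exists>w. \<forall>z. f z = cinner z w"
proof (cases "\<forall>z. f z = 0")
  case False
  then obtain u where "f u \<noteq> 0"
    by blast
  interpret f: bounded_linear f
    by (fact lin)
  define C where "C = {z. f z = 1}"
  have "closed C"
    unfolding C_def by (intro closed_Collect_eq continuous_intros f.continuous_on continuous_on_id)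
  moreover have "(1 / f u) *\<^sub>C u \<in> C"
    using \<open>f u \<noteq> 0\<close> by (simp add: C_def scaleC)
  moreover have "(1/2) *\<^sub>R (a + b) \<in> C" if "a \<in> C" "b \<in> C" for a b
    using that by (simp add: C_def f.scaleR f.add scaleR_conv_of_real)
  ultimately obtain w0 where "w0 \<in> C" and w0_min: "\<And>c. c \<in> C \<Longrightarrow> norm w0 \<le> norm c"
    using closed_midpoint_convex_has_min_norm[of C] by blast
  then have "f w0 = 1"
    by (simp add: C_def)
  have kernel_orth: "cinner v w0 = 0" if "f v = 0" for v
    using that \<open>f w0 = 1\<close> by (intro cinner_eq_zero_if_norm_minimal w0_min) (simp add: C_def f.add scaleC)
  have "f z = cinner z ((1 / (norm w0)\<^sup>2) *\<^sub>R w0)" for z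
  proof -
    have "cinner (z - f z *\<^sub>C w0) w0 = 0"
      using \<open>f w0 = 1\<close> by (intro kernel_orth) (simp add: f.diff scaleC)
    moreover have "w0 \<noteq> 0"
      using \<open>f w0 = 1\<close> f.zero by auto
    ultimately show ?thesis
      by (simp add: cinner_diff_left cinner_scaleC_left cinner_self_norm cinner_scaleR_right)
  qed
  then show ?thesis
    by blast
qed (auto intro: exI[of _ 0])

section \<open>Neumann series\<close>

lemma bounded_clinear_imp_bounded_linear:
  assumes "bounded_clinear f"
  shows "bounded_linear f"
proof -
  obtain K where bound: "\<And>x. norm (f x) \<le> norm x * K" and "clinear f"
    using assms unfolding bounded_clinear_def by blast
  then have "f (x + y) = f x + f y" "f (c *\<^sub>C x) = c *\<^sub>C f x" for c x y
    unfolding clinear_def by blast+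
  then show ?thesis
    by (intro bounded_linear_intro[OF _ _ bound]) (simp_all add: scaleR_scaleC)
qed

lemma neumann_series_sums_fixpoint:
  fixes g :: "'a::real_normed_vector \<Rightarrow> 'a"
  assumes "linear g" and bound: "\<And>z. norm (g z) \<le> q * norm z" and "0 \<le> q" "q < 1"
    and fixpoint: "x = \<phi> + g x"
  shows "(\<lambda>i. (g ^^ i) \<phi>) sums x"
proof -
  have remainder: "x - (\<Sum>i<N. (g ^^ i) \<phi>) = (g ^^ N) x" for N
  proof (induction N)
    case (Suc N)
    have "(\<Sum>i<Suc N. (g ^^ i) \<phi>) = \<phi> + g (\<Sum>i<N. (g ^^ i) \<phi>)"
      using \<open>linear g\<close> by (simp add: sum.lessThan_Suc_shift linear_sum del: sum.lessThan_Suc)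
    then have "x - (\<Sum>i<Suc N. (g ^^ i) \<phi>) = (\<phi> + g x) - (\<phi> + g (\<Sum>i<N. (g ^^ i) \<phi>))"
      by (subst (1) fixpoint) simp
    also have "\<dots> = g (x - (\<Sum>i<N. (g ^^ i) \<phi>))"
      using \<open>linear g\<close> by (simp add: linear_diff)
    finally show ?case
      by (simp add: Suc)
  qed simp
  have power_bound: "norm ((g ^^ N) x) \<le> q ^ N * norm x" for N
  proof (induction N)
    case (Suc N)
    have "norm ((g ^^ Suc N) x) \<le> q * norm ((g ^^ N) x)"
      by (simp add: bound)
    also have "\<dots> \<le> q * (q ^ N * norm x)"
      using Suc \<open>0 \<le> q\<close> by (rule mult_left_mono)
    finally show ?case
      by simp
  qed simp
  have "(\<lambda>N. q ^ N * norm x) \<longlonglongrightarrow> 0"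
    using \<open>0 \<le> q\<close> \<open>q < 1\<close> by (intro tendsto_mult_left_zero LIMSEQ_power_zero) simp
  then have "(\<lambda>N. (g ^^ N) x) \<longlonglongrightarrow> 0"
    by (rule Lim_null_comparison[OF always_eventually[OF allI[OF power_bound]]])
  then have "(\<lambda>N. x - (g ^^ N) x) \<longlonglongrightarrow> x - 0"
    by (intro tendsto_diff tendsto_const)
  then show ?thesis
    unfolding sums_def remainder[symmetric] by simp
qed

lemma contraction_has_affine_fixpoint:
  fixes g :: "'a::{real_normed_vector, complete_space} \<Rightarrow> 'a"
  assumes "linear g" and bound: "\<And>z. norm (g z) \<le> q * norm z" and "0 \<le> q" "q < 1"
  shows "\<exists>x. x = \<phi> + g x"
proof -
  have "dist (\<phi> + g a) (\<phi> + g b) \<le> q * dist a b" for a b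
    using bound[of "a - b"] \<open>linear g\<close> by (simp add: dist_norm linear_diff)
  then have "\<exists>!x. \<phi> + g x = x"
    using \<open>0 \<le> q\<close> \<open>q < 1\<close> by (intro banach_fix_type) auto
  then obtain x where "\<phi> + g x = x"
    by blast
  then show ?thesis
    by (intro exI[of _ x]) simp
qed

section \<open>Partial inner products and the projections Ptil, Pu\<close>

context
  fixes tens :: "'h1::chilbert_space \<Rightarrow> 'h2::chilbert_space \<Rightarrow> 'h::chilbert_space"
  assumes tensor: "hilbert_tensor tens"
begin

lemma tens_add_left: "tens (a + a') b = tens a b + tens a' b"
  using tensor unfolding hilbert_tensor_def clinear_def by blast

lemma tens_scaleC_left: "tens (c *\<^sub>C a) b = c *\<^sub>C tens a b"
  using tensor unfolding hilbert_tensor_def clinear_def by blast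

lemma tens_add_right: "tens a (b + b') = tens a b + tens a b'"
  using tensor unfolding hilbert_tensor_def clinear_def by blast

lemma cinner_tens: "cinner (tens a b) (tens a' b') = cinner a a' * cinner b b'"
  using tensor unfolding hilbert_tensor_def by blast

lemma tens_zero_left [simp]: "tens 0 b = 0"
  using tens_scaleC_left[of 0 0 b] by simp

lemma norm_tens: "norm (tens a b) = norm a * norm b"
proof -
  have "(norm (tens a b))\<^sup>2 = Re (cinner (tens a b) (tens a b))"
    by (rule Re_cinner_self[symmetric])
  also have "\<dots> = (norm a * norm b)\<^sup>2"
    unfolding cinner_tens by (simp add: cinner_self_norm power_mult_distrib del: of_real_power flip: of_real_mult)
  finally have "(norm (tens a b))\<^sup>2 = (norm a * norm b)\<^sup>2" .
  then show ?thesis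
    by (simp add: power2_eq_iff_nonneg)
qed

lemma pinner2_exists: "\<exists>w. \<forall>z. cinner w z = cinner x (tens z y)"
proof -
  let ?f = "\<lambda>z. cnj (cinner x (tens z y))"
  have "bounded_linear ?f"
  proof (rule bounded_linear_intro)
    show "cmod (?f z) \<le> norm z * (norm x * norm y)" for z
      using norm_cinner_cauchy_schwarz[of x "tens z y"] by (simp add: norm_tens mult_ac)
  qed (simp_all add: tens_add_left cinner_add_right scaleR_scaleC tens_scaleC_left cinner_scaleC_right
      scaleR_conv_of_real)
  moreover have "?f (c *\<^sub>C z) = c * ?f z" for c z
    by (simp add: tens_scaleC_left cinner_scaleC_right)
  ultimately obtain w where "\<forall>z. ?f z = cinner z w"
    using riesz_representation by blast
  then have "\<forall>z. cinner w z = cinner x (tens z y)"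
    by (metis cinner_commute complex_cnj_cnj)
  then show ?thesis ..
qed

lemma cinner_pinner2: "cinner (pinner2 tens x y) z = cinner x (tens z y)"
proof -
  have unique: "\<exists>!w. \<forall>z. cinner w z = cinner x (tens z y)"
  proof (rule ex_ex1I)
    fix w w' assume "\<forall>z. cinner w z = cinner x (tens z y)" "\<forall>z. cinner w' z = cinner x (tens z y)"
    then have "cinner (w - w') (w - w') = 0"
      by (simp add: cinner_diff_left)
    then show "w = w'"
      by simp
  qed (rule pinner2_exists)
  show ?thesis
    using theI'[OF unique] unfolding pinner2_def by blast
qed

lemma pinner2_eqI:
  assumes "\<And>z. cinner w z = cinner x (tens z y)"
  shows "pinner2 tens x y = w"
proof -
  have "cinner (pinner2 tens x y - w) (pinner2 tens x y - w) = 0"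
    using assms by (simp add: cinner_diff_left cinner_pinner2)
  then show ?thesis
    by simp
qed

lemma additive_pinner2: "Modules.additive (\<lambda>x. pinner2 tens x y)"
  by unfold_locales (rule pinner2_eqI, simp add: cinner_add_left cinner_pinner2)

lemma pinner2_zero: "pinner2 tens 0 y = 0"
  by (rule additive.zero[OF additive_pinner2])

lemma pinner2_scaleC: "pinner2 tens (c *\<^sub>C x) y = c *\<^sub>C pinner2 tens x y"
  by (rule pinner2_eqI) (simp add: cinner_scaleC_left cinner_pinner2)

lemma pinner2_tens: "pinner2 tens (tens a b) y = cinner b y *\<^sub>C a"
  by (rule pinner2_eqI) (simp add: cinner_scaleC_left cinner_tens mult.commute)

lemma norm_pinner2: "norm (pinner2 tens x y) \<le> norm x * norm y"
proof -
  define w where "w = pinner2 tens x y"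
  have "(norm w)\<^sup>2 = Re (cinner x (tens w y))"
    by (simp add: w_def cinner_pinner2 flip: Re_cinner_self)
  also have "\<dots> \<le> norm x * norm y * norm w"
    using Re_cinner_cauchy_schwarz[of x "tens w y"] by (simp add: norm_tens mult_ac)
  finally show ?thesis
    unfolding w_def[symmetric] by (cases "w = 0") (auto simp: power2_eq_square)
qed

lemma Ptil_add: "Ptil tens n y u (x + x') = Ptil tens n y u x + Ptil tens n y u x'"
  by (simp add: Ptil_def additive.add[OF additive_pinner2] tens_add_left sum.distrib)

lemma Ptil_add_vectors:
  "Ptil tens n y (\<lambda>i. u i + v i) x = Ptil tens n y u x + Ptil tens n y v x"
  by (simp add: Ptil_def tens_add_right sum.distrib)

lemma norm_Ptil: "norm (Ptil tens n y u x) \<le> norm x * (\<Sum>i<n. norm (y i) * norm (u i))"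
proof -
  have "norm (Ptil tens n y u x) \<le> (\<Sum>i<n. norm (pinner2 tens x (y i)) * norm (u i))"
    unfolding Ptil_def using norm_sum[of "\<lambda>i. tens (pinner2 tens x (y i)) (u i)" "{..<n}"]
    by (simp add: norm_tens)
  also have "\<dots> \<le> (\<Sum>i<n. norm x * norm (y i) * norm (u i))"
    by (intro sum_mono mult_right_mono norm_pinner2) simp
  finally show ?thesis
    by (simp add: sum_distrib_left mult.assoc)
qed

lemma bounded_linear_Pu: "bounded_linear (Pu tens n y u)"
proof -
  have "bounded_linear (Ptil tens n y u)"
  proof (rule bounded_linear_intro)
    show "Ptil tens n y u (r *\<^sub>R x) = r *\<^sub>R Ptil tens n y u x" for r x
      by (simp add: Ptil_def scaleR_scaleC pinner2_scaleC tens_scaleC_left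
          complex_vector.scale_sum_right)
  qed (rule Ptil_add, rule norm_Ptil)
  then show ?thesis
    unfolding Pu_def[abs_def] by (intro bounded_linear_sub bounded_linear_ident)
qed

lemma pinner2_Ptil_biorthogonal:
  assumes "\<forall>i<n. cinner (u i) (y j) = (if i = j then 1 else 0)" and "j < n"
  shows "pinner2 tens (Ptil tens n y u x) (y j) = pinner2 tens x (y j)"
proof -
  have "pinner2 tens (Ptil tens n y u x) (y j) = (\<Sum>i<n. cinner (u i) (y j) *\<^sub>C pinner2 tens x (y i))"
    unfolding Ptil_def by (simp add: additive.sum[OF additive_pinner2] pinner2_tens)
  also have "\<dots> = (\<Sum>i<n. if i = j then pinner2 tens x (y i) else 0)"
    using assms(1) by (intro sum.cong) auto
  also have "\<dots> = pinner2 tens x (y j)"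
    using assms(2) by simp
  finally show ?thesis .
qed

lemma Ptil_eq_zero:
  assumes "\<forall>i<n. pinner2 tens x (y i) = 0"
  shows "Ptil tens n y u x = 0"
  using assms by (simp add: Ptil_def tens_zero_left)

lemma norm_A_Pu_add_le:
  assumes "linear A" and "0 \<le> K" and A: "\<And>z. norm (A z) \<le> K * norm z"
    and v: "\<And>i. i < n \<Longrightarrow> norm (y i) * norm (v i) \<le> r"
  shows "norm (A (Pu tens n y (\<lambda>i. u i + v i) z))
    \<le> norm (A (Pu tens n y u z)) + K * (n * r) * norm z"
proof -
  have "A (Pu tens n y (\<lambda>i. u i + v i) z) = A (Pu tens n y u z) - A (Ptil tens n y v z)"
    using \<open>linear A\<close> by (simp add: Pu_def Ptil_add_vectors diff_diff_eq linear_diff linear_add)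
  moreover have "norm (A (Ptil tens n y v z)) \<le> K * (n * r) * norm z"
  proof -
    have "(\<Sum>i<n. norm (y i) * norm (v i)) \<le> n * r"
      using sum_bounded_above[of "{..<n}", OF v] by simp
    then have "norm (Ptil tens n y v z) \<le> norm z * (n * r)"
      using norm_Ptil[of n y v z] mult_left_mono[of _ _ "norm z"] by force
    then have "K * norm (Ptil tens n y v z) \<le> K * (norm z * (n * r))"
      using \<open>0 \<le> K\<close> by (rule mult_left_mono)
    then show ?thesis
      using A[of "Ptil tens n y v z"] by (simp add: mult_ac)
  qed
  ultimately show ?thesis
    using norm_triangle_ineq4[of "A (Pu tens n y u z)" "A (Ptil tens n y v z)"] by simp
qed

lemma bounded_linear_A_Pu:
  assumes "bounded_linear A"
  shows "bounded_linear (A \<circ> Pu tens n y u)"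
  unfolding comp_def using assms bounded_linear_Pu by (rule bounded_linear_compose)

lemma onorm_A_Pu_perturbed_less_1:
  assumes A: "bounded_linear A" and "onorm (A \<circ> Pu tens n y u) < 1"
    and norm_y: "\<forall>i<n. norm (y i) = 1"
  obtains \<delta> where "\<delta> > 0" and "\<And>\<epsilon> \<eta>. cmod \<epsilon> < \<delta> \<Longrightarrow> \<forall>i<n. norm (\<eta> i) = 1 \<Longrightarrow>
    onorm (A \<circ> Pu tens n y (\<lambda>i. u i + \<epsilon> *\<^sub>C \<eta> i)) < 1"
proof -
  obtain K where "0 < K" and A_le: "\<And>z. norm (A z) \<le> K * norm z"
    using bounded_linear.pos_bounded[OF A] by (auto simp: mult.commute)
  define q where "q = onorm (A \<circ> Pu tens n y u)"
  have "0 \<le> q" and q_le: "\<And>z. norm (A (Pu tens n y u z)) \<le> q * norm z"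
    using onorm[OF bounded_linear_A_Pu[OF A]] onorm_pos_le[OF bounded_linear_A_Pu[OF A]]
    unfolding q_def by auto
  define \<delta> where "\<delta> = (1 - q) / (K * (n + 1))"
  have "\<delta> > 0"
    using \<open>onorm (A \<circ> Pu tens n y u) < 1\<close> \<open>0 < K\<close> by (simp add: \<delta>_def q_def)
  moreover have "onorm (A \<circ> Pu tens n y (\<lambda>i. u i + \<epsilon> *\<^sub>C \<eta> i)) < 1"
    if "cmod \<epsilon> < \<delta>" and norm_\<eta>: "\<forall>i<n. norm (\<eta> i) = 1" for \<epsilon> \<eta>
  proof -
    have "K * (n * cmod \<epsilon>) \<le> K * (n + 1) * cmod \<epsilon>"
      using \<open>0 < K\<close> by (simp add: mult_left_mono mult_right_mono)
    also have "\<dots> < K * (n + 1) * \<delta>"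
      using \<open>cmod \<epsilon> < \<delta>\<close> \<open>0 < K\<close> by simp
    finally have "q + K * (n * cmod \<epsilon>) < 1"
      using \<open>0 < K\<close> by (simp add: \<delta>_def)
    moreover have "onorm (A \<circ> Pu tens n y (\<lambda>i. u i + \<epsilon> *\<^sub>C \<eta> i)) \<le> q + K * (n * cmod \<epsilon>)"
    proof (rule onorm_bound)
      show "0 \<le> q + K * (n * cmod \<epsilon>)"
        using \<open>0 \<le> q\<close> \<open>0 < K\<close> by simp
      show "norm ((A \<circ> Pu tens n y (\<lambda>i. u i + \<epsilon> *\<^sub>C \<eta> i)) z)
        \<le> (q + K * (n * cmod \<epsilon>)) * norm z" for z
        using norm_A_Pu_add_le[OF bounded_linear.linear[OF A] less_imp_le[OF \<open>0 < K\<close>] A_le,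
            of n y "\<lambda>i. \<epsilon> *\<^sub>C \<eta> i" "cmod \<epsilon>" u z] q_le[of z] norm_y norm_\<eta>
        by (simp add: norm_scaleC algebra_simps)
    qed
    ultimately show ?thesis
      by linarith
  qed
  ultimately show thesis
    using that by blast
qed

lemma neumann_series_sums_constrained_fixpoint:
  assumes A: "bounded_linear A" and fixpoint: "x = \<phi> + A x"
    and constrained: "\<forall>i<n. pinner2 tens x (y i) = 0" and "onorm (A \<circ> Pu tens n y u) < 1"
  shows "(\<lambda>i. ((A \<circ> Pu tens n y u) ^^ i) \<phi>) sums x" and "Ptil tens n y u x = 0"
proof -
  let ?G = "A \<circ> Pu tens n y u"
  show Ptil: "Ptil tens n y u x = 0"
    using constrained by (rule Ptil_eq_zero)
  note G = bounded_linear_A_Pu[OF A]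
  have "x = \<phi> + ?G x"
    using fixpoint Ptil by (simp add: Pu_def)
  then show "(\<lambda>i. (?G ^^ i) \<phi>) sums x"
    using neumann_series_sums_fixpoint[OF bounded_linear.linear[OF G] onorm[OF G] onorm_pos_le[OF G]]
      \<open>onorm ?G < 1\<close> by blast
qed

lemma constrained_fixpoint_from_neumann_series:
  assumes A: "bounded_linear A" and "onorm (A \<circ> Pu tens n y u) < 1"
    and biorth: "\<forall>i<n. \<forall>j<n. cinner (u i) (y j) = (if i = j then 1 else 0)"
    and Ptil_sum: "Ptil tens n y u (\<Sum>i. ((A \<circ> Pu tens n y u) ^^ i) \<phi>) = 0"
  shows "\<exists>x. x = \<phi> + A x \<and> (\<forall>i<n. pinner2 tens x (y i) = 0)"
proof -
  let ?G = "A \<circ> Pu tens n y u"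
  note G = bounded_linear_A_Pu[OF A]
  note contraction = bounded_linear.linear[OF G] onorm[OF G] onorm_pos_le[OF G] \<open>onorm ?G < 1\<close>
  obtain x where fixpoint: "x = \<phi> + ?G x"
    using contraction_has_affine_fixpoint[OF contraction] by blast
  then have "(\<lambda>i. (?G ^^ i) \<phi>) sums x"
    by (rule neumann_series_sums_fixpoint[OF contraction])
  then have "(\<Sum>i. (?G ^^ i) \<phi>) = x"
    by (rule sums_unique[symmetric])
  with Ptil_sum have "Ptil tens n y u x = 0"
    by simp
  have "pinner2 tens x (y j) = 0" if "j < n" for j
    using pinner2_Ptil_biorthogonal[of n u y j x] biorth that \<open>Ptil tens n y u x = 0\<close>
    by (simp add: pinner2_zero)
  moreover have "x = \<phi> + A x"
    using fixpoint \<open>Ptil tens n y u x = 0\<close> by (simp add: Pu_def)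
  ultimately show ?thesis
    by blast
qed

end

theorem corollary2:
  fixes tens :: "'h1::chilbert_space \<Rightarrow> 'h2::chilbert_space \<Rightarrow> 'h::chilbert_space"
    and J :: "nat set" and \<psi> :: "nat \<Rightarrow> 'h1"
    and A :: "'h \<Rightarrow> 'h" and \<phi> :: 'h
    and n :: nat and y k :: "nat \<Rightarrow> 'h2"
  assumes tensor: "hilbert_tensor tens"
    and onb: "orthonormal_basis J \<psi>"
    and A_bdd: "bounded_clinear A"
    and y_on: "\<forall>i<n. \<forall>j<n. cinner (y i) (y j) = (if i = j then 1 else 0)"
    and k_indep: "clin_indep n k"
    and k_y: "\<forall>i<n. \<forall>j<n. cinner (k i) (y j) = (if i = j then 1 else 0)"
    and norm_lt: "onorm (A \<circ> Pu tens n y k) < 1"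
    and Ptil_zero: "Ptil tens n y k (\<Sum>i. ((A \<circ> Pu tens n y k) ^^ i) \<phi>) = 0"
  shows "\<exists>\<delta>>0. \<forall>\<epsilon>::complex. norm \<epsilon> < \<delta> \<longrightarrow>
     (\<forall>\<eta> :: nat \<Rightarrow> 'h2.
        (\<forall>i<n. norm (\<eta> i) = 1) \<and> (\<forall>i<n. \<forall>j<n. cinner (\<eta> i) (y j) = 0) \<longrightarrow>
        (let k' = (\<lambda>i. k i + \<epsilon> *\<^sub>C \<eta> i);
             x' = (\<Sum>i. ((A \<circ> Pu tens n y k') ^^ i) \<phi>)
         in summable (\<lambda>i. ((A \<circ> Pu tens n y k') ^^ i) \<phi>) \<and>
            Ptil tens n y k' x' = 0 \<and>
            (clin_indep n k' \<longrightarrow>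
               A x' + \<phi> = x' \<and>
               (\<forall>i<n. pinner2 tens x' (y i) = 0) \<and>
               (\<forall>j\<in>J. \<forall>i<n. cinner x' (tens (\<psi> j) (y i)) = 0))))"
proof -
  have A: "bounded_linear A"
    by (rule bounded_clinear_imp_bounded_linear[OF A_bdd])
  obtain x where fixpoint: "x = \<phi> + A x" and constrained: "\<forall>i<n. pinner2 tens x (y i) = 0"
    using constrained_fixpoint_from_neumann_series[OF tensor A norm_lt k_y Ptil_zero] by blast
  have "\<forall>i<n. norm (y i) = 1"
    using y_on by (simp add: norm_eq_1_iff_cinner_self)
  then obtain \<delta> where "\<delta> > 0" and contraction: "\<And>\<epsilon> \<eta>. cmod \<epsilon> < \<delta> \<Longrightarrow> \<forall>i<n. norm (\<eta> i) = 1 \<Longrightarrow>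
      onorm (A \<circ> Pu tens n y (\<lambda>i. k i + \<epsilon> *\<^sub>C \<eta> i)) < 1"
    using onorm_A_Pu_perturbed_less_1[OF tensor A norm_lt] by blast
  note perturbed = neumann_series_sums_constrained_fixpoint[OF tensor A fixpoint constrained contraction]
  have "cinner x (tens z (y i)) = 0" if "i < n" for z i
    using constrained that by (simp flip: cinner_pinner2[OF tensor])
  moreover have "A x + \<phi> = x"
    using fixpoint by (simp only: add.commute)
  ultimately show ?thesis
    using \<open>\<delta> > 0\<close> perturbed constrained by (auto simp: Let_def sums_iff)
qed

end
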